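(* Let $N, n, p, \ell, K \in \mathbb{N}$ with $n \le N$. For $i = 1, \dots, \ell$ let $\boldsymbol A_i \in \mathbb{R}^{N \times N_i}$ with $N_i = \binom{N+i-1}{i}$, and let $\boldsymbol B \in \mathbb{R}^{N \times p}$. Consider the discrete-time system with polynomial nonlinear terms $$\boldsymbol f(\boldsymbol x, \boldsymbol u) = \sum_{i=1}^{\ell} \boldsymbol A_i \boldsymbol x^i + \boldsymbol B \boldsymbol u, \qquad \boldsymbol x \in \mathbb{R}^N,\ \boldsymbol u \in \mathbb{R}^p.$$ Let $\boldsymbol V_n \in \mathbb{R}^{N \times n}$ have orthonormal columns spanning the subspace $\mathcal{V}_n \subset \mathbb{R}^N$. Define the (intrusive, Galerkin) reduced operators $\tilde{\boldsymbol B} = \boldsymbol V_n^T \boldsymbol B$ and, for $i = 1, \dots, \ell$, $\tilde{\boldsymbol A}_i \in \mathbb{R}^{n \times n_i}$ with $n_i = \binom{n+i-1}{i}$ as the unique matrix satisfying $\tilde{\boldsymbol A}_i \boldsymbol y^i = \boldsymbol V_n^T \boldsymbol A_i (\boldsymbol V_n \boldsymbol y)^i$ for all $\boldsymbol y \in \mathbb{R}^n$. Let $\boldsymbol x_0 \in \mathcal{V}_n$ and let $\boldsymbol u_0, \dots, \boldsymbol u_{K-1} \in \mathbb{R}^p$. Define the re-projected states by $\bar{\boldsymbol x}_0 = \boldsymbol V_n^T \boldsymbol x_0$ and $\bar{\boldsymbol x}_{k+1} = \boldsymbol V_n^T \boldsymbol f(\boldsymbol V_n \bar{\boldsymbol x}_k,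 \boldsymbol u_k)$ for $k = 0, \dots, K-1$, and the intrusive reduced-model states by $\tilde{\boldsymbol x}_0 = \boldsymbol V_n^T \boldsymbol x_0$ and $\tilde{\boldsymbol x}_{k+1} = \sum_{i=1}^{\ell} \tilde{\boldsymbol A}_i \tilde{\boldsymbol x}_k^i + \tilde{\boldsymbol B} \boldsymbol u_k$ for $k = 0, \dots, K-1$. Set $\bar{\boldsymbol X} = [\bar{\boldsymbol x}_0, \dots, \bar{\boldsymbol x}_{K-1}]$, $\bar{\boldsymbol Y} = [\bar{\boldsymbol x}_1, \dots, \bar{\boldsymbol x}_K]$, $\tilde{\boldsymbol X} = [\tilde{\boldsymbol x}_0, \dots, \tilde{\boldsymbol x}_{K-1}]$, $\tilde{\boldsymbol Y} = [\tilde{\boldsymbol x}_1, \dots, \tilde{\boldsymbol x}_K]$. Then $\bar{\boldsymbol X} = \tilde{\boldsymbol X}$ and $\bar{\boldsymbol Y} = \tilde{\boldsymbol Y}$.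
   Context: For a vector $\boldsymbol z \in \mathbb{R}^d$ and $i \in \mathbb{N}$, the $i$-th power $\boldsymbol z^i \in \mathbb{R}^{\binom{d+i-1}{i}}$ is the vector obtained from the $i$-fold Kronecker product $\boldsymbol z \otimes \cdots \otimes \boldsymbol z$ by removing duplicate entries arising from commutativity of multiplication, i.e., it lists each degree-$i$ monomial in the entries of $\boldsymbol z$ exactly once (in a fixed ordering); $\boldsymbol z^1 = \boldsymbol z$. Since these monomials are linearly independent functions, the matrix $\tilde{\boldsymbol A}_i$ is well defined and unique. *)

theory Defs
  imports "Jordan_Normal_Form.Matrix"
begin

text \<open>Degree-i monomials in d variables (indices 0..d-1), each listed once as a
  non-decreasing list of variable indices, in lexicographic order.\<close>
fun monomials :: "nat \<Rightarrow> nat \<Rightarrow> nat list list" where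
  "monomials d 0 = [[]]"
| "monomials d (Suc i) =
     concat (map (\<lambda>j. map (\<lambda>m. j # m) (filter (\<lambda>m. \<forall>a\<in>set m. j \<le> a) (monomials d i))) [0..<d])"

definition vpow :: "real vec \<Rightarrow> nat \<Rightarrow> real vec" where
  "vpow z i = vec (length (monomials (dim_vec z) i))
      (\<lambda>k. prod_list (map (\<lambda>j. z $ j) (monomials (dim_vec z) i ! k)))"

definition poly_sys :: "nat \<Rightarrow> (nat \<Rightarrow> real mat) \<Rightarrow> real mat \<Rightarrow> real vec \<Rightarrow> real vec \<Rightarrow> real vec" where
  "poly_sys l A B x u = vec (dim_row B) (\<lambda>r. \<Sum>i=1..l. (A i *\<^sub>v vpow x i) $ r) + B *\<^sub>v u"

end

theory Submission
  imports Defs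
begin

(* Both recursions start at the same reduced state, and one step of the re-projected
   recursion is already one step of the reduced model: V^T is linear, so it passes
   through the sum defining f and turns each V^T A_i (V y)^i into At_i y^i and V^T B u
   into (V^T B) u.  Orthonormality of V (like n <= N and x0 in the span of V) is what
   makes the matrices At_i exist and meaningful; once they are given by their defining
   identity, the argument no longer uses it. *)

lemma mult_mat_vec_sum:
  fixes M :: "'a :: comm_semiring_0 mat"
  assumes M: "M \<in> carrier_mat m d" and f: "\<And>i. i \<in> I \<Longrightarrow> f i \<in> carrier_vec d"
  shows "M *\<^sub>v vec d (\<lambda>r. \<Sum>i\<in>I. f i $ r) = vec m (\<lambda>j. \<Sum>i\<in>I. (M *\<^sub>v f i) $ j)"
proof (rule eq_vecI)
  fix j assume "j < dim_vec (vec m (\<lambda>j. \<Sum>i\<in>I. (M *\<^sub>v f i) $ j))"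
  hence j: "j < m" by simp
  have "(M *\<^sub>v vec d (\<lambda>r. \<Sum>i\<in>I. f i $ r)) $ j = (\<Sum>r<d. M $$ (j, r) * (\<Sum>i\<in>I. f i $ r))"
    using M j by (simp add: scalar_prod_def atLeast0LessThan)
  also have "\<dots> = (\<Sum>i\<in>I. \<Sum>r<d. M $$ (j, r) * f i $ r)"
    by (simp add: sum_distrib_left sum.swap[of _ I])
  also have "\<dots> = (\<Sum>i\<in>I. (M *\<^sub>v f i) $ j)"
  proof (rule sum.cong[OF refl])
    fix i assume "i \<in> I"
    hence "dim_vec (f i) = d" using f by auto
    thus "(\<Sum>r<d. M $$ (j, r) * f i $ r) = (M *\<^sub>v f i) $ j"
      using M j by (simp add: scalar_prod_def atLeast0LessThan)
  qed
  finally show "(M *\<^sub>v vec d (\<lambda>r. \<Sum>i\<in>I. f i $ r)) $ j = vec m (\<lambda>j. \<Sum>i\<in>I. (M *\<^sub>v f i) $ j) $ j"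
    using j by simp
qed (use M in simp)

lemma mult_mat_vec_poly_sys:
  assumes A_rows: "\<And>i. i \<in> {1..l} \<Longrightarrow> dim_row (A i) = d"
    and B: "B \<in> carrier_mat d p" and W: "W \<in> carrier_mat m d" and w: "w \<in> carrier_vec p"
    and At: "\<And>i. i \<in> {1..l} \<Longrightarrow> At i *\<^sub>v vpow y i = W *\<^sub>v (A i *\<^sub>v vpow x i)"
  shows "W *\<^sub>v poly_sys l A B x w = poly_sys l At (W * B) y w"
proof -
  have A_terms: "A i *\<^sub>v vpow x i \<in> carrier_vec d" if "i \<in> {1..l}" for i
    using A_rows[OF that] by (intro carrier_vecI) simp
  have "W *\<^sub>v poly_sys l A B x w
      = W *\<^sub>v vec d (\<lambda>r. \<Sum>i=1..l. (A i *\<^sub>v vpow x i) $ r) + W *\<^sub>v (B *\<^sub>v w)"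
    unfolding poly_sys_def using B W w by (subst mult_add_distrib_mat_vec[of _ m d]) auto
  also have "W *\<^sub>v vec d (\<lambda>r. \<Sum>i=1..l. (A i *\<^sub>v vpow x i) $ r)
      = vec m (\<lambda>j. \<Sum>i=1..l. (W *\<^sub>v (A i *\<^sub>v vpow x i)) $ j)"
    by (rule mult_mat_vec_sum[OF W A_terms])
  also have "\<dots> = vec m (\<lambda>j. \<Sum>i=1..l. (At i *\<^sub>v vpow y i) $ j)"
    using At by simp
  also have "W *\<^sub>v (B *\<^sub>v w) = (W * B) *\<^sub>v w"
    using W B w by simp
  finally show ?thesis unfolding poly_sys_def using W B by simp
qed

theorem proposition3p1:
  fixes N n p l K :: nat
    and A At :: "nat \<Rightarrow> real mat" and B V :: "real mat"
    and x0 :: "real vec" and u xbar xtil :: "nat \<Rightarrow> real vec"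
  assumes "n \<le> N"
    and A_dim: "\<And>i. i \<in> {1..l} \<Longrightarrow> A i \<in> carrier_mat N ((N + i - 1) choose i)"
    and B_dim: "B \<in> carrier_mat N p"
    and V_dim: "V \<in> carrier_mat N n"
    and V_orth: "transpose_mat V * V = 1\<^sub>m n"
    and At_dim: "\<And>i. i \<in> {1..l} \<Longrightarrow> At i \<in> carrier_mat n ((n + i - 1) choose i)"
    and At_def: "\<And>i y. i \<in> {1..l} \<Longrightarrow> y \<in> carrier_vec n \<Longrightarrow>
                   At i *\<^sub>v vpow y i = transpose_mat V *\<^sub>v (A i *\<^sub>v vpow (V *\<^sub>v y) i)"
    and x0_dim: "x0 \<in> carrier_vec N"
    and x0_sub: "\<exists>c \<in> carrier_vec n. x0 = V *\<^sub>v c"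
    and u_dim: "\<And>k. k < K \<Longrightarrow> u k \<in> carrier_vec p"
    and xbar0: "xbar 0 = transpose_mat V *\<^sub>v x0"
    and xbarS: "\<And>k. k < K \<Longrightarrow>
                  xbar (Suc k) = transpose_mat V *\<^sub>v poly_sys l A B (V *\<^sub>v xbar k) (u k)"
    and xtil0: "xtil 0 = transpose_mat V *\<^sub>v x0"
    and xtilS: "\<And>k. k < K \<Longrightarrow>
                  xtil (Suc k) = poly_sys l At (transpose_mat V * B) (xtil k) (u k)"
  shows "mat_of_cols n (map xbar [0..<K]) = mat_of_cols n (map xtil [0..<K])
       \<and> mat_of_cols n (map xbar [1..<Suc K]) = mat_of_cols n (map xtil [1..<Suc K])"
proof -
  have VT: "transpose_mat V \<in> carrier_mat n N" using V_dim by simp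
  have xbar_dim: "xbar k \<in> carrier_vec n" if "k \<le> K" for k
  proof (cases k)
    case 0
    show ?thesis unfolding 0 xbar0 using VT by (intro carrier_vecI) simp
  next
    case (Suc j)
    with that have "j < K" by simp
    show ?thesis unfolding Suc xbarS[OF \<open>j < K\<close>] using VT by (intro carrier_vecI) simp
  qed
  have xbar_eq_xtil: "k \<le> K \<Longrightarrow> xbar k = xtil k" for k
  proof (induction k)
    case 0
    show ?case using xbar0 xtil0 by simp
  next
    case (Suc k)
    hence k: "k < K" and IH: "xbar k = xtil k" by auto
    have "transpose_mat V *\<^sub>v poly_sys l A B (V *\<^sub>v xbar k) (u k)
        = poly_sys l At (transpose_mat V * B) (xbar k) (u k)"
    proof (rule mult_mat_vec_poly_sys[OF _ B_dim VT u_dim[OF k]])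
      fix i assume i: "i \<in> {1..l}"
      show "dim_row (A i) = N" using A_dim[OF i] by simp
      show "At i *\<^sub>v vpow (xbar k) i = transpose_mat V *\<^sub>v (A i *\<^sub>v vpow (V *\<^sub>v xbar k) i)"
        using At_def[OF i xbar_dim] k by simp
    qed
    thus ?case using xbarS[OF k] xtilS[OF k] IH by simp
  qed
  have "map xbar [0..<K] = map xtil [0..<K]" and "map xbar [1..<Suc K] = map xtil [1..<Suc K]"
    using xbar_eq_xtil by (auto intro: map_cong)
  thus ?thesis by (simp only:)
qed

end
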